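(* Let $\mu$ be a joint distribution of a triple $(X,A,Y)$ with $X\in\mathcal{X}\subseteq\mathbb{R}^d$, $A\in\{0,1\}$ with $\Pr(A=0),\Pr(A=1)>0$, and $Y\in[-1,1]$. Let $h:\mathcal{X}\to\mathbb{R}$ be measurable and $\widehat{Y}=h(X)$. If $\widehat{Y}$ is statistically independent of $A$ (statistical parity), then for every $p\geq 1$, $$\varepsilon_{p,\mu_0}(\widehat{Y})+\varepsilon_{p,\mu_1}(\widehat{Y})\geq W_p(Y_\sharp\mu_0,Y_\sharp\mu_1).$$
   Context: For $a\in\{0,1\}$, $\mu_a$ is the conditional distribution of $(X,Y)$ given $A=a$. For a distribution $\nu$, $\varepsilon_{p,\nu}(\widehat{Y}):=\left(\mathbb{E}_\nu[|\widehat{Y}-Y|^p]\right)^{1/p}$. $Y_\sharp\mu_a$ denotes the distribution of $Y$ under $\mu_a$. $W_p(\nu,\nu')=\left(\inf_{\gamma\in\Gamma(\nu,\nu')}\int|t-t'|^p\,d\gamma(t,t')\right)^{1/p}$ is the $p$-Wasserstein distance, where $\Gamma(\nu,\nu')$ is the set of couplings of $\nu$ and $\nu'$. *)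

theory Defs
  imports "HOL-Probability.Probability"
begin

definition ennpowr :: "ennreal \<Rightarrow> real \<Rightarrow> ennreal" where
  "ennpowr x r = (if x = \<infinity> then \<infinity> else ennreal (enn2real x powr r))"

definition cond_measure :: "'o measure \<Rightarrow> ('o \<Rightarrow> nat) \<Rightarrow> nat \<Rightarrow> 'o measure" where
  "cond_measure M A a = uniform_measure M {\<omega> \<in> space M. A \<omega> = a}"

definition eps_p :: "real \<Rightarrow> 'o measure \<Rightarrow> ('o \<Rightarrow> real) \<Rightarrow> ('o \<Rightarrow> real) \<Rightarrow> ennreal" where
  "eps_p p \<nu> Yhat Y = ennpowr (\<integral>\<^sup>+ \<omega>. ennreal (\<bar>Yhat \<omega> - Y \<omega>\<bar> powr p) \<partial>\<nu>) (1 / p)"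

definition couplings :: "real measure \<Rightarrow> real measure \<Rightarrow> (real \<times> real) measure set" where
  "couplings \<nu> \<nu>' = {\<gamma>. sets \<gamma> = sets (borel \<Otimes>\<^sub>M borel) \<and> prob_space \<gamma> \<and>
       distr \<gamma> borel fst = \<nu> \<and> distr \<gamma> borel snd = \<nu>'}"

definition wasserstein :: "real \<Rightarrow> real measure \<Rightarrow> real measure \<Rightarrow> ennreal" where
  "wasserstein p \<nu> \<nu>' = ennpowr
     (INF \<gamma>\<in>couplings \<nu> \<nu>'. \<integral>\<^sup>+ z. ennreal (\<bar>fst z - snd z\<bar> powr p) \<partial>\<gamma>) (1 / p)"

end

theory Submission
  imports Defs
begin

(* Statistical parity means that Yhat = h X has the same law under mu_0 and mu_1. Gluing mu_0
   and mu_1 along Yhat would give a coupling of the two laws of Y on which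
   |Y - Y'| <= |Y - Yhat| + |Yhat' - Y'|, and Minkowski's inequality would bound its p-cost by
   (eps_0 + eps_1)^p. Exact gluing needs disintegration, so Yhat is only matched up to a grid of
   mesh delta: on each cell of positive mass the two conditional laws are coupled independently.
   This costs an extra delta in the triangle inequality, and delta -> 0 gives the claim. *)

lemma convex_on_powr_nonneg:
  fixes p :: real
  assumes "p \<ge> 1" shows "convex_on {0..} (\<lambda>x. x powr p)"
proof (rule convex_onI)
  fix t x y :: real assume t: "0 < t" "t < 1" and x: "x \<in> {0..}" and y: "y \<in> {0..}"
  have shrink: "(s * z) powr p \<le> s * z powr p" if "0 \<le> s" "s \<le> 1" "0 \<le> z" for s z :: real
    using powr_mono'[of 1 p s] that assms by (simp add: powr_mult mult_right_mono)
  show "((1 - t) *\<^sub>R x + t *\<^sub>R y) powr p \<le> (1 - t) * x powr p + t * y powr p"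
  proof (cases "x = 0 \<or> y = 0")
    case True
    then show ?thesis using shrink[of t y] shrink[of "1 - t" x] t x y assms by auto
  next
    case False
    then show ?thesis using convex_onD[OF powr_convex[OF assms], of t x y] x y t by auto
  qed
qed simp

lemma powr_add_le_weighted:
  fixes x y a b p :: real
  assumes "x \<ge> 0" "y \<ge> 0" "a > 0" "b > 0" "p \<ge> 1"
  shows "(x + y) powr p \<le> (a + b) powr (p - 1) * (x powr p / a powr (p - 1) + y powr p / b powr (p - 1))"
proof -
  define t where "t = b / (a + b)"
  have pa: "a powr p = a * a powr (p - 1)" and pb: "b powr p = b * b powr (p - 1)"
    using assms by (simp_all add: powr_mult_base)
  have pos: "a powr (p - 1) > 0" "b powr (p - 1) > 0" "a + b > 0"
    using assms by simp_all
  have t: "0 \<le> t" "t \<le> 1" "1 - t = a / (a + b)" using assms by (auto simp: t_def field_simps)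
  have "((x + y) / (a + b)) powr p = ((1 - t) *\<^sub>R (x / a) + t *\<^sub>R (y / b)) powr p"
    unfolding t(3) using assms by (simp add: t_def add_divide_distrib)
  also have "\<dots> \<le> (1 - t) * (x / a) powr p + t * (y / b) powr p"
    using convex_onD[OF convex_on_powr_nonneg[OF \<open>p \<ge> 1\<close>], of t "x / a" "y / b"] t assms by simp
  also have "\<dots> = (x powr p / a powr (p - 1) + y powr p / b powr (p - 1)) / (a + b)"
  proof -
    have "(1 - t) * (x / a) powr p = x powr p / a powr (p - 1) / (a + b)"
      using assms pos unfolding t(3) by (simp add: powr_divide pa)
    moreover have "t * (y / b) powr p = y powr p / b powr (p - 1) / (a + b)"
      using assms pos unfolding t_def by (simp add: powr_divide pb)
    ultimately show ?thesis by (simp add: add_divide_distrib)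
  qed
  finally show ?thesis
    using assms by (simp add: powr_divide powr_diff field_simps)
qed

lemma nn_integral_powr_add_le:
  fixes f g :: "'a \<Rightarrow> real" and \<alpha> \<beta> p :: real
  assumes [measurable]: "f \<in> borel_measurable M" "g \<in> borel_measurable M"
    and f0: "\<And>x. 0 \<le> f x" and g0: "\<And>x. 0 \<le> g x"
    and p: "p \<ge> 1" and \<alpha>: "\<alpha> > 0" and \<beta>: "\<beta> > 0"
    and If: "(\<integral>\<^sup>+ x. ennreal (f x powr p) \<partial>M) \<le> ennreal (\<alpha> powr p)"
    and Ig: "(\<integral>\<^sup>+ x. ennreal (g x powr p) \<partial>M) \<le> ennreal (\<beta> powr p)"
  shows "(\<integral>\<^sup>+ x. ennreal ((f x + g x) powr p) \<partial>M) \<le> ennreal ((\<alpha> + \<beta>) powr p)"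
proof -
  define C where "C = (\<alpha> + \<beta>) powr (p - 1)"
  define c\<^sub>f c\<^sub>g where "c\<^sub>f = C / \<alpha> powr (p - 1)" and "c\<^sub>g = C / \<beta> powr (p - 1)"
  have c: "c\<^sub>f \<ge> 0" "c\<^sub>g \<ge> 0" by (simp_all add: c\<^sub>f_def c\<^sub>g_def C_def)
  have "(\<integral>\<^sup>+ x. ennreal ((f x + g x) powr p) \<partial>M)
      \<le> (\<integral>\<^sup>+ x. ennreal c\<^sub>f * ennreal (f x powr p) + ennreal c\<^sub>g * ennreal (g x powr p) \<partial>M)"
  proof (rule nn_integral_mono)
    fix x
    have "(f x + g x) powr p \<le> c\<^sub>f * f x powr p + c\<^sub>g * g x powr p"
      using powr_add_le_weighted[OF f0 g0 \<alpha> \<beta> p, of x x]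
      by (simp add: c\<^sub>f_def c\<^sub>g_def C_def field_simps)
    then have "ennreal ((f x + g x) powr p) \<le> ennreal (c\<^sub>f * f x powr p + c\<^sub>g * g x powr p)"
      by (rule ennreal_leI)
    then show "ennreal ((f x + g x) powr p) \<le> ennreal c\<^sub>f * ennreal (f x powr p) + ennreal c\<^sub>g * ennreal (g x powr p)"
      using c by (simp add: ennreal_plus ennreal_mult)
  qed
  also have "\<dots> = ennreal c\<^sub>f * (\<integral>\<^sup>+ x. ennreal (f x powr p) \<partial>M) + ennreal c\<^sub>g * (\<integral>\<^sup>+ x. ennreal (g x powr p) \<partial>M)"
    by (simp add: nn_integral_add nn_integral_cmult)
  also have "\<dots> \<le> ennreal c\<^sub>f * ennreal (\<alpha> powr p) + ennreal c\<^sub>g * ennreal (\<beta> powr p)"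
    using If Ig by (intro add_mono mult_left_mono) auto
  also have "\<dots> = ennreal (c\<^sub>f * \<alpha> powr p + c\<^sub>g * \<beta> powr p)"
    using c by (simp add: ennreal_plus ennreal_mult)
  also have "c\<^sub>f * \<alpha> powr p + c\<^sub>g * \<beta> powr p = C * \<alpha> + C * \<beta>"
  proof -
    have "\<alpha> powr p / \<alpha> powr (p - 1) = \<alpha>" "\<beta> powr p / \<beta> powr (p - 1) = \<beta>"
      using \<alpha> \<beta> by (simp_all flip: powr_diff)
    then show ?thesis by (simp add: c\<^sub>f_def c\<^sub>g_def flip: times_divide_eq_right)
  qed
  also have "C * \<alpha> + C * \<beta> = (\<alpha> + \<beta>) powr p"
    using \<alpha> \<beta> by (simp add: C_def powr_mult_base mult.commute flip: distrib_right)
  finally show ?thesis .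
qed

lemma abs_diff_less_if_floor_divide_eq:
  fixes x y \<epsilon> :: real
  assumes "\<lfloor>x / \<epsilon>\<rfloor> = \<lfloor>y / \<epsilon>\<rfloor>" "\<epsilon> > 0"
  shows "\<bar>x - y\<bar> < \<epsilon>"
proof -
  have "\<bar>x / \<epsilon> - y / \<epsilon>\<bar> < 1"
    using assms(1) floor_correct[of "x / \<epsilon>"] floor_correct[of "y / \<epsilon>"] by linarith
  then have "\<bar>x - y\<bar> / \<epsilon> < 1"
    using assms(2) by (simp add: diff_divide_distrib[symmetric])
  then show ?thesis
    using assms(2) by (simp add: divide_less_eq)
qed

lemma ennreal_powr_enn2real_ennpowr:
  assumes "x \<noteq> \<infinity>" "p > 0"
  shows "ennreal (enn2real (ennpowr x (1 / p)) powr p) = x"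
  using assms by (simp add: ennpowr_def powr_powr less_top[symmetric])

lemma ennpowr_le_ennreal:
  assumes le: "\<And>\<delta>. \<delta> > 0 \<Longrightarrow> x \<le> ennreal ((e + \<delta>) powr p)" and e: "e \<ge> 0" and p: "p > 0"
  shows "ennpowr x (1 / p) \<le> ennreal e"
proof -
  have "x < \<infinity>"
    using le[of 1] by (simp add: le_less_trans)
  then obtain w where x: "x = ennreal w" and w: "w \<ge> 0"
    by (cases x rule: ennreal_cases) auto
  have "w powr (1 / p) \<le> e"
  proof (rule field_le_epsilon)
    fix \<delta> :: real assume "\<delta> > 0"
    then have "w \<le> (e + \<delta>) powr p"
      using le[of \<delta>] w by (simp add: x ennreal_le_iff)
    then have "w powr (1 / p) \<le> ((e + \<delta>) powr p) powr (1 / p)"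
      using w p by (intro powr_mono2) auto
    also have "\<dots> = e + \<delta>"
      using e p \<open>\<delta> > 0\<close> by (simp add: powr_powr)
    finally show "w powr (1 / p) \<le> e + \<delta>" .
  qed
  then show ?thesis
    using w by (simp add: x ennpowr_def ennreal_leI)
qed

lemma AE_emeasure_level_set_nonzero:
  fixes b :: "'a \<Rightarrow> 'k::countable"
  assumes [measurable]: "b \<in> measurable M (count_space UNIV)"
  shows "AE x in M. emeasure M (b -` {b x} \<inter> space M) \<noteq> 0"
proof (rule AE_I')
  show "(\<Union>k\<in>{k. emeasure M (b -` {k} \<inter> space M) = 0}. b -` {k} \<inter> space M) \<in> null_sets M"
    by (rule null_sets_UN') (auto simp: null_sets_def)
qed auto

lemma nn_integral_level_set_normalized:
  assumes [measurable]: "b \<in> measurable M (count_space UNIV)"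
    and level: "emeasure M (b -` {k} \<inter> space M) = ennreal r" and r: "r > 0"
  shows "(\<integral>\<^sup>+ y. (if b y = k then ennreal (1 / r) else 0) \<partial>M) = 1"
proof -
  have "(\<integral>\<^sup>+ y. (if b y = k then ennreal (1 / r) else 0) \<partial>M)
      = (\<integral>\<^sup>+ y. ennreal (1 / r) * indicator (b -` {k} \<inter> space M) y \<partial>M)"
    by (rule nn_integral_cong) (simp split: split_indicator)
  also have "\<dots> = ennreal (1 / r) * ennreal r"
    by (subst nn_integral_cmult_indicator) (simp_all add: level)
  also have "\<dots> = 1"
    using r by (simp flip: ennreal_mult)
  finally show ?thesis .
qed

(* On a cell {b = k} of positive mass q_k (the same under M_0 and M_1 when b has the same law),
   this is q_k times the product of the conditional laws of M_0 and M_1 given b = k. *)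
definition bin_coupling :: "'a measure \<Rightarrow> 'a measure \<Rightarrow> ('a \<Rightarrow> 'k) \<Rightarrow> ('a \<times> 'a) measure" where
  "bin_coupling M\<^sub>0 M\<^sub>1 b = density (M\<^sub>0 \<Otimes>\<^sub>M M\<^sub>1)
     (\<lambda>(x, y). if b x = b y then ennreal (1 / measure M\<^sub>0 (b -` {b x} \<inter> space M\<^sub>0)) else 0)"

lemma distr_fst_density_pair_measure:
  assumes "sigma_finite_measure M\<^sub>1" and [measurable]: "F \<in> borel_measurable (M\<^sub>0 \<Otimes>\<^sub>M M\<^sub>1)"
    and fibre: "AE x in M\<^sub>0. (\<integral>\<^sup>+ y. F (x, y) \<partial>M\<^sub>1) = 1"
  shows "distr (density (M\<^sub>0 \<Otimes>\<^sub>M M\<^sub>1) F) M\<^sub>0 fst = M\<^sub>0"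
proof (rule measure_eqI)
  interpret M\<^sub>1: sigma_finite_measure M\<^sub>1 by fact
  fix A assume "A \<in> sets (distr (density (M\<^sub>0 \<Otimes>\<^sub>M M\<^sub>1) F) M\<^sub>0 fst)"
  then have A[measurable]: "A \<in> sets M\<^sub>0" by simp
  have "fst -` A \<inter> space (M\<^sub>0 \<Otimes>\<^sub>M M\<^sub>1) = A \<times> space M\<^sub>1"
    using sets.sets_into_space[OF A] by (auto simp: space_pair_measure)
  then have "emeasure (distr (density (M\<^sub>0 \<Otimes>\<^sub>M M\<^sub>1) F) M\<^sub>0 fst) A
      = (\<integral>\<^sup>+ z. F z * indicator (A \<times> space M\<^sub>1) z \<partial>(M\<^sub>0 \<Otimes>\<^sub>M M\<^sub>1))"
    by (subst emeasure_distr) (simp_all add: emeasure_density)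
  also have "\<dots> = (\<integral>\<^sup>+ x. indicator A x * (\<integral>\<^sup>+ y. F (x, y) \<partial>M\<^sub>1) \<partial>M\<^sub>0)"
    by (simp add: M\<^sub>1.nn_integral_fst[symmetric] indicator_times mult_ac flip: nn_integral_cmult)
       (auto intro!: nn_integral_cong split: split_indicator)
  also have "\<dots> = (\<integral>\<^sup>+ x. indicator A x \<partial>M\<^sub>0)"
    using fibre by (intro nn_integral_cong_AE) auto
  finally show "emeasure (distr (density (M\<^sub>0 \<Otimes>\<^sub>M M\<^sub>1) F) M\<^sub>0 fst) A = emeasure M\<^sub>0 A"
    by simp
qed simp

lemma distr_snd_density_pair_measure:
  assumes "sigma_finite_measure M\<^sub>0" "sigma_finite_measure M\<^sub>1"
    and [measurable]: "F \<in> borel_measurable (M\<^sub>0 \<Otimes>\<^sub>M M\<^sub>1)"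
    and fibre: "AE y in M\<^sub>1. (\<integral>\<^sup>+ x. F (x, y) \<partial>M\<^sub>0) = 1"
  shows "distr (density (M\<^sub>0 \<Otimes>\<^sub>M M\<^sub>1) F) M\<^sub>1 snd = M\<^sub>1"
proof (rule measure_eqI)
  interpret pair_sigma_finite M\<^sub>0 M\<^sub>1
    by (intro pair_sigma_finite.intro) fact+
  fix B assume "B \<in> sets (distr (density (M\<^sub>0 \<Otimes>\<^sub>M M\<^sub>1) F) M\<^sub>1 snd)"
  then have B[measurable]: "B \<in> sets M\<^sub>1" by simp
  have "snd -` B \<inter> space (M\<^sub>0 \<Otimes>\<^sub>M M\<^sub>1) = space M\<^sub>0 \<times> B"
    using sets.sets_into_space[OF B] by (auto simp: space_pair_measure)
  then have "emeasure (distr (density (M\<^sub>0 \<Otimes>\<^sub>M M\<^sub>1) F) M\<^sub>1 snd) B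
      = (\<integral>\<^sup>+ z. F z * indicator (space M\<^sub>0 \<times> B) z \<partial>(M\<^sub>0 \<Otimes>\<^sub>M M\<^sub>1))"
    by (subst emeasure_distr) (simp_all add: emeasure_density)
  also have "\<dots> = (\<integral>\<^sup>+ y. indicator B y * (\<integral>\<^sup>+ x. F (x, y) \<partial>M\<^sub>0) \<partial>M\<^sub>1)"
    by (simp add: nn_integral_snd[symmetric] indicator_times mult_ac flip: nn_integral_cmult)
       (auto intro!: nn_integral_cong split: split_indicator)
  also have "\<dots> = (\<integral>\<^sup>+ y. indicator B y \<partial>M\<^sub>1)"
    using fibre by (intro nn_integral_cong_AE) auto
  finally show "emeasure (distr (density (M\<^sub>0 \<Otimes>\<^sub>M M\<^sub>1) F) M\<^sub>1 snd) B = emeasure M\<^sub>1 B"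
    by simp
qed simp

lemma
  fixes b :: "'a \<Rightarrow> 'k::countable"
  assumes "prob_space M\<^sub>0" "prob_space M\<^sub>1"
    and b\<^sub>0[measurable]: "b \<in> measurable M\<^sub>0 (count_space UNIV)"
    and b\<^sub>1[measurable]: "b \<in> measurable M\<^sub>1 (count_space UNIV)"
    and same_law: "distr M\<^sub>0 (count_space UNIV) b = distr M\<^sub>1 (count_space UNIV) b"
  shows bin_coupling_distr_fst: "distr (bin_coupling M\<^sub>0 M\<^sub>1 b) M\<^sub>0 fst = M\<^sub>0"
    and bin_coupling_distr_snd: "distr (bin_coupling M\<^sub>0 M\<^sub>1 b) M\<^sub>1 snd = M\<^sub>1"
proof -
  interpret M\<^sub>0: prob_space M\<^sub>0 by fact
  interpret M\<^sub>1: prob_space M\<^sub>1 by fact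
  define q where "q k = measure M\<^sub>0 (b -` {k} \<inter> space M\<^sub>0)" for k
  define F where "F = (\<lambda>(x, y). if b x = b y then ennreal (1 / q (b x)) else 0)"
  have G: "bin_coupling M\<^sub>0 M\<^sub>1 b = density (M\<^sub>0 \<Otimes>\<^sub>M M\<^sub>1) F"
    unfolding bin_coupling_def F_def q_def ..
  have [measurable]: "F \<in> borel_measurable (M\<^sub>0 \<Otimes>\<^sub>M M\<^sub>1)"
    unfolding F_def by measurable
  have level\<^sub>0: "emeasure M\<^sub>0 (b -` {k} \<inter> space M\<^sub>0) = ennreal (q k)" for k
    by (simp add: q_def M\<^sub>0.emeasure_eq_measure)
  have level\<^sub>1: "emeasure M\<^sub>1 (b -` {k} \<inter> space M\<^sub>1) = ennreal (q k)" for k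
    using arg_cong[OF same_law, of "\<lambda>N. emeasure N {k}"] by (simp add: emeasure_distr level\<^sub>0)
  have fibre\<^sub>1: "AE x in M\<^sub>0. (\<integral>\<^sup>+ y. F (x, y) \<partial>M\<^sub>1) = 1"
    using AE_emeasure_level_set_nonzero[OF b\<^sub>0]
  proof eventually_elim
    case (elim x)
    have "F (x, y) = (if b y = b x then ennreal (1 / q (b x)) else 0)" for y
      by (auto simp: F_def)
    with elim show ?case
      using nn_integral_level_set_normalized[OF b\<^sub>1 level\<^sub>1] by (simp add: level\<^sub>0 ennreal_eq_0_iff not_le)
  qed
  show "distr (bin_coupling M\<^sub>0 M\<^sub>1 b) M\<^sub>0 fst = M\<^sub>0"
    unfolding G by (rule distr_fst_density_pair_measure[OF M\<^sub>1.sigma_finite_measure_axioms _ fibre\<^sub>1]) measurable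
  have fibre\<^sub>0: "AE y in M\<^sub>1. (\<integral>\<^sup>+ x. F (x, y) \<partial>M\<^sub>0) = 1"
    using AE_emeasure_level_set_nonzero[OF b\<^sub>1]
  proof eventually_elim
    case (elim y)
    have "F (x, y) = (if b x = b y then ennreal (1 / q (b y)) else 0)" for x
      by (auto simp: F_def)
    with elim show ?case
      using nn_integral_level_set_normalized[OF b\<^sub>0 level\<^sub>0] by (simp add: level\<^sub>1 ennreal_eq_0_iff not_le)
  qed
  show "distr (bin_coupling M\<^sub>0 M\<^sub>1 b) M\<^sub>1 snd = M\<^sub>1"
    unfolding G
    by (rule distr_snd_density_pair_measure[OF M\<^sub>0.sigma_finite_measure_axioms M\<^sub>1.sigma_finite_measure_axioms _ fibre\<^sub>0])
      measurable
qed

lemma prob_space_bin_coupling: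
  fixes b :: "'a \<Rightarrow> 'k::countable"
  assumes "prob_space M\<^sub>0" "prob_space M\<^sub>1"
    and "b \<in> measurable M\<^sub>0 (count_space UNIV)" "b \<in> measurable M\<^sub>1 (count_space UNIV)"
    and "distr M\<^sub>0 (count_space UNIV) b = distr M\<^sub>1 (count_space UNIV) b"
  shows "prob_space (bin_coupling M\<^sub>0 M\<^sub>1 b)"
proof (rule prob_space_distrD)
  show "fst \<in> measurable (bin_coupling M\<^sub>0 M\<^sub>1 b) M\<^sub>0"
    by (simp add: bin_coupling_def)
  show "prob_space (distr (bin_coupling M\<^sub>0 M\<^sub>1 b) M\<^sub>0 fst)"
    using assms by (simp add: bin_coupling_distr_fst)
qed

lemma distr_map_prod_in_couplings:
  assumes "prob_space G" and sets_G[measurable_cong]: "sets G = sets (M\<^sub>0 \<Otimes>\<^sub>M M\<^sub>1)"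
    and marg\<^sub>0: "distr G M\<^sub>0 fst = M\<^sub>0" and marg\<^sub>1: "distr G M\<^sub>1 snd = M\<^sub>1"
    and [measurable]: "Y\<^sub>0 \<in> borel_measurable M\<^sub>0" "Y\<^sub>1 \<in> borel_measurable M\<^sub>1"
  shows "distr G (borel \<Otimes>\<^sub>M borel) (map_prod Y\<^sub>0 Y\<^sub>1) \<in> couplings (distr M\<^sub>0 borel Y\<^sub>0) (distr M\<^sub>1 borel Y\<^sub>1)"
proof -
  have [measurable]: "map_prod Y\<^sub>0 Y\<^sub>1 \<in> measurable G (borel \<Otimes>\<^sub>M borel)"
    by (simp add: map_prod_def)
  have "distr (distr G (borel \<Otimes>\<^sub>M borel) (map_prod Y\<^sub>0 Y\<^sub>1)) borel fst = distr (distr G M\<^sub>0 fst) borel Y\<^sub>0"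
    by (simp add: distr_distr comp_def)
  moreover have "distr (distr G (borel \<Otimes>\<^sub>M borel) (map_prod Y\<^sub>0 Y\<^sub>1)) borel snd = distr (distr G M\<^sub>1 snd) borel Y\<^sub>1"
    by (simp add: distr_distr comp_def)
  moreover have "prob_space (distr G (borel \<Otimes>\<^sub>M borel) (map_prod Y\<^sub>0 Y\<^sub>1))"
    by (simp add: \<open>prob_space G\<close> prob_space.prob_space_distr)
  ultimately show ?thesis
    by (simp add: couplings_def marg\<^sub>0 marg\<^sub>1)
qed

lemma coupling_close_along_same_law:
  fixes M\<^sub>0 M\<^sub>1 :: "'a measure" and g :: "'a \<Rightarrow> real"
  assumes M: "prob_space M\<^sub>0" "prob_space M\<^sub>1"
    and [measurable]: "g \<in> borel_measurable M\<^sub>0" "g \<in> borel_measurable M\<^sub>1"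
    and same_law: "distr M\<^sub>0 borel g = distr M\<^sub>1 borel g" and \<epsilon>: "\<epsilon> > 0"
  obtains G where "prob_space G" "sets G = sets (M\<^sub>0 \<Otimes>\<^sub>M M\<^sub>1)"
    "distr G M\<^sub>0 fst = M\<^sub>0" "distr G M\<^sub>1 snd = M\<^sub>1" "AE z in G. \<bar>g (fst z) - g (snd z)\<bar> \<le> \<epsilon>"
proof
  define b where "b = (\<lambda>\<omega>. \<lfloor>g \<omega> / \<epsilon>\<rfloor>)"
  have b\<^sub>0[measurable]: "b \<in> measurable M\<^sub>0 (count_space UNIV)"
    and b\<^sub>1[measurable]: "b \<in> measurable M\<^sub>1 (count_space UNIV)"
    unfolding b_def by measurable
  have bin_law: "distr M\<^sub>0 (count_space UNIV) b = distr M\<^sub>1 (count_space UNIV) b"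
  proof -
    have "distr M (count_space UNIV) b = distr (distr M borel g) (count_space UNIV) (\<lambda>t. \<lfloor>t / \<epsilon>\<rfloor>)"
      if "g \<in> borel_measurable M" for M
      using that by (simp add: distr_distr comp_def b_def)
    then show ?thesis by (simp add: same_law)
  qed
  show "prob_space (bin_coupling M\<^sub>0 M\<^sub>1 b)"
    using M b\<^sub>0 b\<^sub>1 bin_law by (rule prob_space_bin_coupling)
  show "sets (bin_coupling M\<^sub>0 M\<^sub>1 b) = sets (M\<^sub>0 \<Otimes>\<^sub>M M\<^sub>1)"
    by (simp add: bin_coupling_def)
  show "distr (bin_coupling M\<^sub>0 M\<^sub>1 b) M\<^sub>0 fst = M\<^sub>0" "distr (bin_coupling M\<^sub>0 M\<^sub>1 b) M\<^sub>1 snd = M\<^sub>1"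
    using M b\<^sub>0 b\<^sub>1 bin_law by (rule bin_coupling_distr_fst bin_coupling_distr_snd)+
  have "AE z in bin_coupling M\<^sub>0 M\<^sub>1 b. b (fst z) = b (snd z)"
    unfolding bin_coupling_def by (subst AE_density) (auto split: if_splits)
  then show "AE z in bin_coupling M\<^sub>0 M\<^sub>1 b. \<bar>g (fst z) - g (snd z)\<bar> \<le> \<epsilon>"
    by eventually_elim (use abs_diff_less_if_floor_divide_eq \<epsilon> in \<open>force simp: b_def\<close>)
qed

lemma coupling_cost_le:
  fixes g Y :: "'a \<Rightarrow> real"
  assumes "prob_space G" and [measurable_cong]: "sets G = sets (M\<^sub>0 \<Otimes>\<^sub>M M\<^sub>1)"
    and marg\<^sub>0: "distr G M\<^sub>0 fst = M\<^sub>0" and marg\<^sub>1: "distr G M\<^sub>1 snd = M\<^sub>1"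
    and close: "AE z in G. \<bar>g (fst z) - g (snd z)\<bar> \<le> \<epsilon>"
    and [measurable]: "g \<in> borel_measurable M\<^sub>0" "g \<in> borel_measurable M\<^sub>1"
      "Y \<in> borel_measurable M\<^sub>0" "Y \<in> borel_measurable M\<^sub>1"
    and p: "p \<ge> 1" and \<epsilon>: "\<epsilon> > 0" and e: "e\<^sub>0 \<ge> 0" "e\<^sub>1 \<ge> 0"
    and err\<^sub>0: "(\<integral>\<^sup>+ \<omega>. ennreal (\<bar>g \<omega> - Y \<omega>\<bar> powr p) \<partial>M\<^sub>0) \<le> ennreal (e\<^sub>0 powr p)"
    and err\<^sub>1: "(\<integral>\<^sup>+ \<omega>. ennreal (\<bar>g \<omega> - Y \<omega>\<bar> powr p) \<partial>M\<^sub>1) \<le> ennreal (e\<^sub>1 powr p)"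
  shows "(\<integral>\<^sup>+ z. ennreal (\<bar>Y (fst z) - Y (snd z)\<bar> powr p) \<partial>G) \<le> ennreal ((e\<^sub>0 + e\<^sub>1 + 3 * \<epsilon>) powr p)"
proof -
  interpret G: prob_space G by fact
  have weaken: "ennreal (e powr p) \<le> ennreal ((e + \<epsilon>) powr p)" if "e \<ge> 0" for e
    using that \<epsilon> p by (intro ennreal_leI powr_mono2) auto
  have "(\<integral>\<^sup>+ z. ennreal (\<bar>g (fst z) - Y (fst z)\<bar> powr p) \<partial>G) = (\<integral>\<^sup>+ \<omega>. ennreal (\<bar>g \<omega> - Y \<omega>\<bar> powr p) \<partial>M\<^sub>0)"
    by (subst marg\<^sub>0[symmetric], subst nn_integral_distr) simp_all
  then have err_G\<^sub>0: "(\<integral>\<^sup>+ z. ennreal (\<bar>g (fst z) - Y (fst z)\<bar> powr p) \<partial>G) \<le> ennreal ((e\<^sub>0 + \<epsilon>) powr p)"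
    using order_trans[OF err\<^sub>0 weaken[OF e(1)]] by simp
  have "(\<integral>\<^sup>+ z. ennreal (\<bar>g (snd z) - Y (snd z)\<bar> powr p) \<partial>G) = (\<integral>\<^sup>+ \<omega>. ennreal (\<bar>g \<omega> - Y \<omega>\<bar> powr p) \<partial>M\<^sub>1)"
    by (subst marg\<^sub>1[symmetric], subst nn_integral_distr) simp_all
  then have err_G\<^sub>1: "(\<integral>\<^sup>+ z. ennreal (\<bar>g (snd z) - Y (snd z)\<bar> powr p) \<partial>G) \<le> ennreal ((e\<^sub>1 + \<epsilon>) powr p)"
    using order_trans[OF err\<^sub>1 weaken[OF e(2)]] by simp
  have "(\<integral>\<^sup>+ z. ennreal (\<bar>g (fst z) - g (snd z)\<bar> powr p) \<partial>G) \<le> (\<integral>\<^sup>+ z. ennreal (\<epsilon> powr p) \<partial>G)"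
    using close p by (intro nn_integral_mono_AE) (auto elim!: eventually_mono intro!: ennreal_leI powr_mono2)
  then have spread_G: "(\<integral>\<^sup>+ z. ennreal (\<bar>g (fst z) - g (snd z)\<bar> powr p) \<partial>G) \<le> ennreal (\<epsilon> powr p)"
    by (simp add: G.emeasure_space_1)
  have "(\<integral>\<^sup>+ z. ennreal (\<bar>Y (fst z) - Y (snd z)\<bar> powr p) \<partial>G)
      \<le> (\<integral>\<^sup>+ z. ennreal (((\<bar>g (fst z) - Y (fst z)\<bar> + \<bar>g (fst z) - g (snd z)\<bar>) + \<bar>g (snd z) - Y (snd z)\<bar>) powr p) \<partial>G)"
    using p by (intro nn_integral_mono ennreal_leI powr_mono2) auto
  also have "\<dots> \<le> ennreal (((e\<^sub>0 + \<epsilon>) + \<epsilon> + (e\<^sub>1 + \<epsilon>)) powr p)"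
    using e \<epsilon> p err_G\<^sub>0 err_G\<^sub>1 spread_G by (intro nn_integral_powr_add_le) auto
  also have "(e\<^sub>0 + \<epsilon>) + \<epsilon> + (e\<^sub>1 + \<epsilon>) = e\<^sub>0 + e\<^sub>1 + 3 * \<epsilon>"
    by simp
  finally show ?thesis .
qed

lemma INF_couplings_cost_le:
  fixes M\<^sub>0 M\<^sub>1 :: "'a measure" and g Y :: "'a \<Rightarrow> real"
  assumes M: "prob_space M\<^sub>0" "prob_space M\<^sub>1"
    and g[measurable]: "g \<in> borel_measurable M\<^sub>0" "g \<in> borel_measurable M\<^sub>1"
    and [measurable]: "Y \<in> borel_measurable M\<^sub>0" "Y \<in> borel_measurable M\<^sub>1"
    and same_law: "distr M\<^sub>0 borel g = distr M\<^sub>1 borel g"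
    and p: "p \<ge> 1" and \<delta>: "\<delta> > 0" and e: "e\<^sub>0 \<ge> 0" "e\<^sub>1 \<ge> 0"
    and err\<^sub>0: "(\<integral>\<^sup>+ \<omega>. ennreal (\<bar>g \<omega> - Y \<omega>\<bar> powr p) \<partial>M\<^sub>0) \<le> ennreal (e\<^sub>0 powr p)"
    and err\<^sub>1: "(\<integral>\<^sup>+ \<omega>. ennreal (\<bar>g \<omega> - Y \<omega>\<bar> powr p) \<partial>M\<^sub>1) \<le> ennreal (e\<^sub>1 powr p)"
  shows "(INF \<gamma>\<in>couplings (distr M\<^sub>0 borel Y) (distr M\<^sub>1 borel Y). \<integral>\<^sup>+ z. ennreal (\<bar>fst z - snd z\<bar> powr p) \<partial>\<gamma>)
           \<le> ennreal ((e\<^sub>0 + e\<^sub>1 + \<delta>) powr p)"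
proof -
  have \<epsilon>: "\<delta> / 3 > 0" using \<delta> by simp
  obtain G where G: "prob_space G" and sets_G[measurable_cong]: "sets G = sets (M\<^sub>0 \<Otimes>\<^sub>M M\<^sub>1)"
    and marg: "distr G M\<^sub>0 fst = M\<^sub>0" "distr G M\<^sub>1 snd = M\<^sub>1"
    and close: "AE z in G. \<bar>g (fst z) - g (snd z)\<bar> \<le> \<delta> / 3"
    using coupling_close_along_same_law[OF M g same_law \<epsilon>] by blast
  have "(INF \<gamma>\<in>couplings (distr M\<^sub>0 borel Y) (distr M\<^sub>1 borel Y). \<integral>\<^sup>+ z. ennreal (\<bar>fst z - snd z\<bar> powr p) \<partial>\<gamma>)
      \<le> (\<integral>\<^sup>+ z. ennreal (\<bar>fst z - snd z\<bar> powr p) \<partial>distr G (borel \<Otimes>\<^sub>M borel) (map_prod Y Y))"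
    by (rule INF_lower, rule distr_map_prod_in_couplings) (use G sets_G marg in auto)
  also have "\<dots> = (\<integral>\<^sup>+ z. ennreal (\<bar>Y (fst z) - Y (snd z)\<bar> powr p) \<partial>G)"
    by (simp add: nn_integral_distr map_prod_def split_beta)
  also have "\<dots> \<le> ennreal ((e\<^sub>0 + e\<^sub>1 + 3 * (\<delta> / 3)) powr p)"
    using G sets_G marg close p \<epsilon> e err\<^sub>0 err\<^sub>1 by (intro coupling_cost_le) auto
  finally show ?thesis
    by simp
qed

theorem wasserstein_le_eps_p_add:
  fixes M\<^sub>0 M\<^sub>1 :: "'a measure" and g Y :: "'a \<Rightarrow> real"
  assumes M: "prob_space M\<^sub>0" "prob_space M\<^sub>1"
    and [measurable]: "g \<in> borel_measurable M\<^sub>0" "g \<in> borel_measurable M\<^sub>1"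
      "Y \<in> borel_measurable M\<^sub>0" "Y \<in> borel_measurable M\<^sub>1"
    and same_law: "distr M\<^sub>0 borel g = distr M\<^sub>1 borel g" and p: "p \<ge> 1"
  shows "wasserstein p (distr M\<^sub>0 borel Y) (distr M\<^sub>1 borel Y) \<le> eps_p p M\<^sub>0 g Y + eps_p p M\<^sub>1 g Y"
proof (cases "eps_p p M\<^sub>0 g Y = \<infinity> \<or> eps_p p M\<^sub>1 g Y = \<infinity>")
  case True
  then show ?thesis by auto
next
  case False
  define e\<^sub>0 e\<^sub>1 where "e\<^sub>0 = enn2real (eps_p p M\<^sub>0 g Y)" and "e\<^sub>1 = enn2real (eps_p p M\<^sub>1 g Y)"
  have err: "(\<integral>\<^sup>+ \<omega>. ennreal (\<bar>g \<omega> - Y \<omega>\<bar> powr p) \<partial>M\<^sub>0) = ennreal (e\<^sub>0 powr p)"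
    "(\<integral>\<^sup>+ \<omega>. ennreal (\<bar>g \<omega> - Y \<omega>\<bar> powr p) \<partial>M\<^sub>1) = ennreal (e\<^sub>1 powr p)"
  proof -
    have "(\<integral>\<^sup>+ \<omega>. ennreal (\<bar>g \<omega> - Y \<omega>\<bar> powr p) \<partial>M\<^sub>0) \<noteq> \<infinity>" "(\<integral>\<^sup>+ \<omega>. ennreal (\<bar>g \<omega> - Y \<omega>\<bar> powr p) \<partial>M\<^sub>1) \<noteq> \<infinity>"
      using False by (auto simp: eps_p_def ennpowr_def)
    moreover have "p > 0" using p by simp
    ultimately show "(\<integral>\<^sup>+ \<omega>. ennreal (\<bar>g \<omega> - Y \<omega>\<bar> powr p) \<partial>M\<^sub>0) = ennreal (e\<^sub>0 powr p)"
      "(\<integral>\<^sup>+ \<omega>. ennreal (\<bar>g \<omega> - Y \<omega>\<bar> powr p) \<partial>M\<^sub>1) = ennreal (e\<^sub>1 powr p)"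
      unfolding e\<^sub>0_def e\<^sub>1_def eps_p_def by (simp_all add: ennreal_powr_enn2real_ennpowr)
  qed
  have "wasserstein p (distr M\<^sub>0 borel Y) (distr M\<^sub>1 borel Y) \<le> ennreal (e\<^sub>0 + e\<^sub>1)"
    unfolding wasserstein_def using p
    by (intro ennpowr_le_ennreal INF_couplings_cost_le[OF M, where g = g]) (simp_all add: same_law err e\<^sub>0_def e\<^sub>1_def)
  also have "\<dots> = eps_p p M\<^sub>0 g Y + eps_p p M\<^sub>1 g Y"
    using False by (simp add: e\<^sub>0_def e\<^sub>1_def ennreal_plus less_top[symmetric])
  finally show ?thesis .
qed

lemma sets_cond_measure [simp, measurable_cong]: "sets (cond_measure M A a) = sets M"
  by (simp add: cond_measure_def)

lemma prob_space_cond_measure: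
  assumes "prob_space M" and [measurable]: "A \<in> measurable M (count_space UNIV)"
    and pos: "measure M {\<omega> \<in> space M. A \<omega> = a} > 0"
  shows "prob_space (cond_measure M A a)"
proof -
  interpret prob_space M by fact
  show ?thesis
    unfolding cond_measure_def
    by (rule prob_space_uniform_measure) (use pos in \<open>simp_all add: emeasure_eq_measure\<close>)
qed

lemma (in prob_space) distr_cond_measure_eq_if_indep_var:
  assumes indep: "indep_var borel g borel (\<lambda>\<omega>. real (A \<omega>))"
    and [measurable]: "g \<in> borel_measurable M" "A \<in> measurable M (count_space UNIV)"
    and pos: "prob {\<omega> \<in> space M. A \<omega> = a} > 0"
  shows "distr (cond_measure M A a) borel g = distr M borel g"
proof (rule measure_eqI)
  fix B :: "real set" assume "B \<in> sets (distr (cond_measure M A a) borel g)"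
  then have B[measurable]: "B \<in> sets borel" by simp
  let ?S = "{\<omega> \<in> space M. A \<omega> = a}"
  have "prob ((\<lambda>\<omega>. (g \<omega>, real (A \<omega>))) -` (B \<times> {real a}) \<inter> space M)
      = prob (g -` B \<inter> space M) * prob ((\<lambda>\<omega>. real (A \<omega>)) -` {real a} \<inter> space M)"
    by (rule indep_varD[OF indep]) auto
  moreover have "(\<lambda>\<omega>. (g \<omega>, real (A \<omega>))) -` (B \<times> {real a}) \<inter> space M = ?S \<inter> (g -` B \<inter> space M)"
    and "(\<lambda>\<omega>. real (A \<omega>)) -` {real a} \<inter> space M = ?S"
    by auto
  ultimately have joint: "prob (?S \<inter> (g -` B \<inter> space M)) = prob (g -` B \<inter> space M) * prob ?S"
    by simp
  have "emeasure (distr (cond_measure M A a) borel g) B = emeasure M (?S \<inter> (g -` B \<inter> space M)) / emeasure M ?S"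
    by (simp add: emeasure_distr cond_measure_def emeasure_uniform_measure)
  also have "\<dots> = ennreal (prob (g -` B \<inter> space M) * prob ?S) / ennreal (prob ?S)"
    by (simp add: emeasure_eq_measure joint)
  also have "\<dots> = emeasure (distr M borel g) B"
    using pos by (simp add: emeasure_distr emeasure_eq_measure divide_ennreal)
  finally show "emeasure (distr (cond_measure M A a) borel g) B = emeasure (distr M borel g) B" .
qed simp

theorem theorem1:
  fixes M :: "'o measure"
    and \<X> :: "(real ^ 'd) set"
    and X :: "'o \<Rightarrow> real ^ 'd"
    and A :: "'o \<Rightarrow> nat"
    and Y :: "'o \<Rightarrow> real"
    and h :: "real ^ 'd \<Rightarrow> real"
    and p :: real
  assumes "prob_space M"
    and "X \<in> borel_measurable M"
    and "\<And>\<omega>. \<omega> \<in> space M \<Longrightarrow> X \<omega> \<in> \<X>"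
    and "A \<in> measurable M (count_space UNIV)"
    and "\<And>\<omega>. \<omega> \<in> space M \<Longrightarrow> A \<omega> \<in> {0, 1}"
    and "measure M {\<omega> \<in> space M. A \<omega> = 0} > 0"
    and "measure M {\<omega> \<in> space M. A \<omega> = 1} > 0"
    and "Y \<in> borel_measurable M"
    and "AE \<omega> in M. Y \<omega> \<in> {-1..1}"
    and "h \<in> borel_measurable (restrict_space borel \<X>)"
    and "prob_space.indep_var M (borel :: real measure) (\<lambda>\<omega>. h (X \<omega>)) (borel :: real measure) (\<lambda>\<omega>. real (A \<omega>))"
    and "p \<ge> 1"
  shows "eps_p p (cond_measure M A 0) (\<lambda>\<omega>. h (X \<omega>)) Y
           + eps_p p (cond_measure M A 1) (\<lambda>\<omega>. h (X \<omega>)) Y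
         \<ge> wasserstein p (distr (cond_measure M A 0) borel Y) (distr (cond_measure M A 1) borel Y)"
proof -
  interpret prob_space M by fact
  have X[measurable]: "X \<in> measurable M (restrict_space borel \<X>)"
    by (rule measurable_restrict_space2) (use assms(2,3) in auto)
  have [measurable]: "(\<lambda>\<omega>. h (X \<omega>)) \<in> borel_measurable M"
    using measurable_comp[OF X assms(10)] by (simp add: comp_def)
  have law: "distr (cond_measure M A a) borel (\<lambda>\<omega>. h (X \<omega>)) = distr M borel (\<lambda>\<omega>. h (X \<omega>))"
    and cond: "prob_space (cond_measure M A a)" if "a \<in> {0, 1}" for a
    using that assms(4,6,7,11)
    by (auto intro: distr_cond_measure_eq_if_indep_var prob_space_cond_measure[OF \<open>prob_space M\<close>])
  show ?thesis
    using assms(4,8,12)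
    by (intro wasserstein_le_eps_p_add cond) (simp_all add: law)
qed

end
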